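(* Let $G$ be the cdf of a continuous real random variable. For $\lambda\in\mathbb{R}$ define $$F_{R19}(x)=(1-\lambda)G(x)+3\lambda G^2(x)-2\lambda G^3(x),$$ and for $(\lambda_1,\lambda_2)\in\mathbb{R}^2$ define $F_G(x)=\lambda_1 G(x)+(\lambda_2-\lambda_1)G^2(x)+(1-\lambda_2)G^3(x)$. Let $\mathscr{S}_G=\{(\lambda_1,\lambda_2):0\le\lambda_1\le1,\ -1\le\lambda_2\le1\}$ and $\mathscr{S}_{MG}=\{(\lambda_1,\lambda_2):0\le\lambda_1\le3,\ 0\le\lambda_2\le3,\ 0\le\lambda_1+\lambda_2\le3\}$. Then: (i) For every $\lambda\in[-1,1]$ with $\lambda\neq0$, there is no $(\lambda_1,\lambda_2)\in\mathscr{S}_G$ such that $F_{R19}$ with parameter $\lambda$ coincides with $F_G$ with parameters $(\lambda_1,\lambda_2)$. (ii) For every $\lambda\in[-\tfrac12,1]$, $(1-\lambda,1+2\lambda)\in\mathscr{S}_{MG}$ and $F_{R19}$ with parameter $\lambda$ coincides with $F_G$ with parameters $(1-\lambda,1+2\lambda)$. (iii) For every $\lambda\in[-2,1]$, $F_{R19}$ is a cdf.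
   Context: A cdf is a nondecreasing, right-continuous function $F:\mathbb{R}\to[0,1]$ with limits $0$ at $-\infty$ and $1$ at $+\infty$. $G^k(x)=(G(x))^k$. *)

theory Defs
  imports "HOL-Analysis.Analysis"
begin

definition is_cdf :: "(real \<Rightarrow> real) \<Rightarrow> bool" where
  "is_cdf F \<longleftrightarrow> mono F \<and> (\<forall>x. continuous (at_right x) F) \<and> (\<forall>x. 0 \<le> F x \<and> F x \<le> 1)
     \<and> (F \<longlongrightarrow> 0) at_bot \<and> (F \<longlongrightarrow> 1) at_top"

definition F_R19 :: "real \<Rightarrow> (real \<Rightarrow> real) \<Rightarrow> real \<Rightarrow> real" where
  "F_R19 lam G x = (1 - lam) * G x + 3 * lam * (G x)^2 - 2 * lam * (G x)^3"

definition F_G :: "real \<Rightarrow> real \<Rightarrow> (real \<Rightarrow> real) \<Rightarrow> real \<Rightarrow> real" where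
  "F_G l1 l2 G x = l1 * G x + (l2 - l1) * (G x)^2 + (1 - l2) * (G x)^3"

definition S_G :: "(real \<times> real) set" where
  "S_G = {(l1, l2). 0 \<le> l1 \<and> l1 \<le> 1 \<and> -1 \<le> l2 \<and> l2 \<le> 1}"

definition S_MG :: "(real \<times> real) set" where
  "S_MG = {(l1, l2). 0 \<le> l1 \<and> l1 \<le> 3 \<and> 0 \<le> l2 \<and> l2 \<le> 3 \<and> 0 \<le> l1 + l2 \<and> l1 + l2 \<le> 3}"

end

theory Submission
  imports Defs
begin

text \<open>Two members of the family \<open>F_G\<close> differ by
  \<open>G(1 - G)(a + b G)\<close>, so once \<open>G\<close> takes two distinct values in \<open>(0,1)\<close>, as a continuous cdf does,
  the parameters are determined by the function; those of \<open>F_R19\<close> are \<open>(1 - \<lambda>, 1 + 2\<lambda>)\<close>, which lie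
  in \<open>S_G\<close> only for \<open>\<lambda> = 0\<close>. For (iii), \<open>F_R19\<close> is \<open>G\<close> followed by a polynomial that fixes
  \<open>0\<close> and \<open>1\<close> and, for \<open>-2 \<le> \<lambda> \<le> 1\<close>, is nondecreasing on \<open>[0,1]\<close>.\<close>

lemma is_cdf_comp:
  fixes G p :: "real \<Rightarrow> real"
  assumes cdf: "is_cdf G" and cont: "\<And>t. isCont p t" and mono: "mono_on {0..1} p"
    and p0: "p 0 = 0" and p1: "p 1 = 1"
  shows "is_cdf (\<lambda>x. p (G x))"
proof -
  have G_mono: "mono G" and G_rcont: "\<And>x. continuous (at_right x) G"
    and G_range: "\<And>x. G x \<in> {0..1}"
    and G_bot: "(G \<longlongrightarrow> 0) at_bot" and G_top: "(G \<longlongrightarrow> 1) at_top"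
    using cdf unfolding is_cdf_def by auto
  have "p (G x) \<le> p (G y)" if "x \<le> y" for x y
    using mono_onD[OF mono G_range G_range] G_mono that by (simp add: monoD)
  moreover have "0 \<le> p (G x) \<and> p (G x) \<le> 1" for x
    using mono_onD[OF mono _ G_range, of 0] mono_onD[OF mono G_range _, of 1] G_range[of x]
    by (simp add: p0 p1)
  moreover have "continuous (at_right x) (\<lambda>x. p (G x))" for x
    using continuous_within_compose3[OF cont G_rcont] .
  moreover have "((\<lambda>x. p (G x)) \<longlongrightarrow> 0) at_bot"
    using isCont_tendsto_compose[OF cont G_bot] by (simp add: p0)
  moreover have "((\<lambda>x. p (G x)) \<longlongrightarrow> 1) at_top"
    using isCont_tendsto_compose[OF cont G_top] by (simp add: p1)
  ultimately show ?thesis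
    unfolding is_cdf_def by (auto intro: monoI)
qed

lemma continuous_cdf_attains:
  fixes G :: "real \<Rightarrow> real"
  assumes cdf: "is_cdf G" and cont: "continuous_on UNIV G" and c: "0 < c" "c < 1"
  shows "\<exists>x. G x = c"
proof -
  have G_mono: "mono G" and G_bot: "(G \<longlongrightarrow> 0) at_bot" and G_top: "(G \<longlongrightarrow> 1) at_top"
    using cdf unfolding is_cdf_def by auto
  obtain a where a: "G a < c"
    using eventually_happens[OF order_tendstoD(2)[OF G_bot \<open>0 < c\<close>]] by auto
  obtain b where b: "c < G b"
    using eventually_happens[OF order_tendstoD(1)[OF G_top \<open>c < 1\<close>]] by auto
  have "a \<le> b"
    using a b G_mono by (metis linorder_le_cases monoD not_less order.strict_trans)
  moreover have "isCont G x" for x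
    using cont by (simp add: continuous_on_eq_continuous_at)
  ultimately show ?thesis
    using IVT[of G a c b] a b by auto
qed

lemma F_R19_eq_F_G: "F_R19 lam G = F_G (1 - lam) (1 + 2 * lam) G"
  unfolding F_R19_def F_G_def by (rule ext) (simp add: algebra_simps)

lemma F_G_diff:
  "F_G l1 l2 G x - F_G m1 m2 G x = G x * (1 - G x) * ((l1 - m1) + (l2 - m2) * G x)"
  unfolding F_G_def by (simp add: algebra_simps power2_eq_square power3_eq_cube)

lemma F_G_params_unique:
  assumes eq: "F_G l1 l2 G = F_G m1 m2 G"
    and x: "0 < G x" "G x < 1" and y: "0 < G y" "G y < 1" and xy: "G x \<noteq> G y"
  shows "l1 = m1 \<and> l2 = m2"
proof -
  have "(l1 - m1) + (l2 - m2) * G z = 0" if "0 < G z" "G z < 1" for z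
    using F_G_diff[of l1 l2 G z m1 m2] eq that by simp
  from this[OF x] this[OF y] have "(l2 - m2) * (G x - G y) = 0"
    by (simp add: algebra_simps)
  with xy have "l2 = m2" by simp
  with \<open>(l1 - m1) + (l2 - m2) * G x = 0\<close> show ?thesis by simp
qed

lemma F_R19_id_diff:
  "F_R19 lam id t - F_R19 lam id s
     = (t - s) * (1 - lam + lam * (3 * (t + s) - 2 * (t\<^sup>2 + t * s + s\<^sup>2)))"
  unfolding F_R19_def by (simp add: algebra_simps power2_eq_square power3_eq_cube)

lemma quadratic_form_unit_square_bounds:
  fixes s t :: real
  assumes "s \<in> {0..1}" "t \<in> {0..1}"
  shows "0 \<le> 3 * (t + s) - 2 * (t\<^sup>2 + t * s + s\<^sup>2)"
    and "3 * (t + s) - 2 * (t\<^sup>2 + t * s + s\<^sup>2) \<le> 3 / 2"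
proof -
  have "3 * (t + s) - 2 * (t\<^sup>2 + t * s + s\<^sup>2) = t * (1 - t) + s * (1 - s) + (t + s) * (2 - t - s)"
    by (simp add: algebra_simps power2_eq_square)
  moreover have "0 \<le> t * (1 - t) + s * (1 - s) + (t + s) * (2 - t - s)"
    using assms by simp
  ultimately show "0 \<le> 3 * (t + s) - 2 * (t\<^sup>2 + t * s + s\<^sup>2)" by simp
  have "3 / 2 - (3 * (t + s) - 2 * (t\<^sup>2 + t * s + s\<^sup>2)) = 3 / 2 * (t + s - 1)\<^sup>2 + (t - s)\<^sup>2 / 2"
    by (simp add: field_simps power2_eq_square)
  moreover have "0 \<le> 3 / 2 * (t + s - 1)\<^sup>2 + (t - s)\<^sup>2 / 2"
    by simp
  ultimately show "3 * (t + s) - 2 * (t\<^sup>2 + t * s + s\<^sup>2) \<le> 3 / 2"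
    by linarith
qed

lemma F_R19_id_mono_on:
  assumes "-2 \<le> lam" "lam \<le> 1"
  shows "mono_on {0..1} (F_R19 lam id)"
proof (rule mono_onI)
  fix s t :: real
  assume st: "s \<in> {0..1}" "t \<in> {0..1}" "s \<le> t"
  define h where "h = 3 * (t + s) - 2 * (t\<^sup>2 + t * s + s\<^sup>2)"
  have "0 \<le> h" "h \<le> 3 / 2"
    using quadratic_form_unit_square_bounds[OF st(1,2)] unfolding h_def by auto
  then have "0 \<le> 1 - lam + lam * h"
  proof (cases "0 \<le> lam")
    case True
    then show ?thesis using \<open>0 \<le> h\<close> assms by simp
  next
    case False
    then have "lam * (3 / 2) \<le> lam * h" using \<open>h \<le> 3 / 2\<close> by (simp add: mult_left_mono_neg)
    then show ?thesis using assms by linarith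
  qed
  with \<open>s \<le> t\<close> have "0 \<le> (t - s) * (1 - lam + lam * h)"
    by simp
  then show "F_R19 lam id s \<le> F_R19 lam id t"
    using F_R19_id_diff[of lam t s] unfolding h_def by linarith
qed

lemma F_R19_eq_comp: "F_R19 lam G = (\<lambda>x. F_R19 lam id (G x))"
  unfolding F_R19_def by simp

theorem proposition5:
  fixes G :: "real \<Rightarrow> real"
  assumes cdf: "is_cdf G" and cont: "continuous_on UNIV G"
  shows "(\<forall>lam. -1 \<le> lam \<and> lam \<le> 1 \<and> lam \<noteq> 0 \<longrightarrow>
            \<not> (\<exists>(l1, l2) \<in> S_G. F_R19 lam G = F_G l1 l2 G))
       \<and> (\<forall>lam. -(1/2) \<le> lam \<and> lam \<le> 1 \<longrightarrow>
            (1 - lam, 1 + 2 * lam) \<in> S_MG \<and> F_R19 lam G = F_G (1 - lam) (1 + 2 * lam) G)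
       \<and> (\<forall>lam. -2 \<le> lam \<and> lam \<le> 1 \<longrightarrow> is_cdf (F_R19 lam G))"
proof (intro conjI allI impI)
  fix lam :: real
  assume lam: "-1 \<le> lam \<and> lam \<le> 1 \<and> lam \<noteq> 0"
  obtain x where x: "G x = 1 / 4"
    using continuous_cdf_attains[OF cdf cont, of "1 / 4"] by auto
  obtain y where y: "G y = 1 / 2"
    using continuous_cdf_attains[OF cdf cont, of "1 / 2"] by auto
  show "\<not> (\<exists>(l1, l2) \<in> S_G. F_R19 lam G = F_G l1 l2 G)"
  proof
    assume "\<exists>(l1, l2) \<in> S_G. F_R19 lam G = F_G l1 l2 G"
    then obtain l1 l2 where S: "(l1, l2) \<in> S_G" and eq: "F_G (1 - lam) (1 + 2 * lam) G = F_G l1 l2 G"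
      by (auto simp: F_R19_eq_F_G)
    have "l1 = 1 - lam" "l2 = 1 + 2 * lam"
      using F_G_params_unique[OF eq, of x y] x y by auto
    with S lam show False by (auto simp: S_G_def)
  qed
next
  fix lam :: real
  assume "-(1/2) \<le> lam \<and> lam \<le> 1"
  then show "(1 - lam, 1 + 2 * lam) \<in> S_MG" by (auto simp: S_MG_def)
  show "F_R19 lam G = F_G (1 - lam) (1 + 2 * lam) G" by (rule F_R19_eq_F_G)
next
  fix lam :: real
  assume lam: "-2 \<le> lam \<and> lam \<le> 1"
  have "isCont (F_R19 lam id) t" for t
    unfolding F_R19_def by (intro continuous_intros)
  moreover have "mono_on {0..1} (F_R19 lam id)"
    using lam by (intro F_R19_id_mono_on) auto
  ultimately show "is_cdf (F_R19 lam G)"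
    unfolding F_R19_eq_comp[of lam G]
    by (rule is_cdf_comp[OF cdf]) (simp_all add: F_R19_def)
qed

end
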